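(* There is a signature $\tau$ and a first-order sentence $\varphi$ over $\tau$ such that $\varphi$ is preserved under globally-homomorphic preimages in the finite (for all finite $\tau$-structures $\mathcal{A},\mathcal{B}$, if $\mathcal{A}\Rightarrow\mathcal{B}$ and $\mathcal{B}\models\varphi$ then $\mathcal{A}\models\varphi$), but $\varphi$ is not equivalent over finite structures to any finite set of generalized dependencies.
   Context: Signatures are relational (constant and relation symbols). A generalized dependency (GD) is a sentence $\forall\vec{x}(\phi(\vec{x})\rightarrow\exists\vec{y}(\psi_1\vee\cdots\vee\psi_n))$, $n\ge0$, with $\phi,\psi_i$ conjunctions of atomic formulas (equalities allowed; for $n=0$ the head is $\bot$). For $a_1,\dots,a_k\in A$, $(\mathcal{A},a_1,\dots,a_k)$ is the expansion interpreting fresh constant symbols as $a_1,\dots,a_k$. $\mathcal{A}\rightleftarrows\mathcal{B}$ means there are homomorphisms (maps preserving constants and relations) in both directions. $\mathcal{A}\Rightarrow\mathcal{B}$ means there is a function $\pi$ mapping every finite tuple $\vec a$ over $A$ to a tuple $\pi(\vec a)$ over $B$ of the same length with $(\mathcal{A},\vec{a})\rightleftarrows(\mathcal{B},\pi(\vec{a}))$. "Equivalent over finite structures" means having the same finite models. *)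

theory Defs
  imports Main
begin

text \<open>Relation symbols are pairs (name, arity); constant symbols are naturals.\<close>
record sig =
  cnsts :: "nat set"
  rels  :: "(nat \<times> nat) set"

record 'a strc =
  dom  :: "'a set"
  cint :: "nat \<Rightarrow> 'a"
  rint :: "nat \<times> nat \<Rightarrow> 'a list set"

definition is_struct :: "sig \<Rightarrow> 'a strc \<Rightarrow> bool" where
  "is_struct \<tau> A \<longleftrightarrow> dom A \<noteq> {}
     \<and> (\<forall>c\<in>cnsts \<tau>. cint A c \<in> dom A)
     \<and> (\<forall>R\<in>rels \<tau>. \<forall>t\<in>rint A R. length t = snd R \<and> set t \<subseteq> dom A)"

datatype trm = Var nat | Cst nat

datatype fm = FTrue | FFalse | Eq trm trm | Rel "nat \<times> nat" "trm list"
  | Neg fm | Conj fm fm | Disj fm fm | Imp fm fm | Ex nat fm | All nat fm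

fun eval :: "'a strc \<Rightarrow> (nat \<Rightarrow> 'a) \<Rightarrow> trm \<Rightarrow> 'a" where
  "eval A v (Var x) = v x"
| "eval A v (Cst c) = cint A c"

fun sat :: "'a strc \<Rightarrow> (nat \<Rightarrow> 'a) \<Rightarrow> fm \<Rightarrow> bool" where
  "sat A v FTrue = True"
| "sat A v FFalse = False"
| "sat A v (Eq s t) = (eval A v s = eval A v t)"
| "sat A v (Rel R ts) = (map (eval A v) ts \<in> rint A R)"
| "sat A v (Neg p) = (\<not> sat A v p)"
| "sat A v (Conj p q) = (sat A v p \<and> sat A v q)"
| "sat A v (Disj p q) = (sat A v p \<or> sat A v q)"
| "sat A v (Imp p q) = (sat A v p \<longrightarrow> sat A v q)"
| "sat A v (Ex x p) = (\<exists>a\<in>dom A. sat A (v(x := a)) p)"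
| "sat A v (All x p) = (\<forall>a\<in>dom A. sat A (v(x := a)) p)"

fun tvars :: "trm \<Rightarrow> nat set" where
  "tvars (Var x) = {x}"
| "tvars (Cst c) = {}"

fun fv :: "fm \<Rightarrow> nat set" where
  "fv FTrue = {}"
| "fv FFalse = {}"
| "fv (Eq s t) = tvars s \<union> tvars t"
| "fv (Rel R ts) = \<Union> (tvars ` set ts)"
| "fv (Neg p) = fv p"
| "fv (Conj p q) = fv p \<union> fv q"
| "fv (Disj p q) = fv p \<union> fv q"
| "fv (Imp p q) = fv p \<union> fv q"
| "fv (Ex x p) = fv p - {x}"
| "fv (All x p) = fv p - {x}"

fun wf_trm :: "sig \<Rightarrow> trm \<Rightarrow> bool" where
  "wf_trm \<tau> (Var x) = True"
| "wf_trm \<tau> (Cst c) = (c \<in> cnsts \<tau>)"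

fun wf_fm :: "sig \<Rightarrow> fm \<Rightarrow> bool" where
  "wf_fm \<tau> FTrue = True"
| "wf_fm \<tau> FFalse = True"
| "wf_fm \<tau> (Eq s t) = (wf_trm \<tau> s \<and> wf_trm \<tau> t)"
| "wf_fm \<tau> (Rel R ts) = (R \<in> rels \<tau> \<and> length ts = snd R \<and> (\<forall>t\<in>set ts. wf_trm \<tau> t))"
| "wf_fm \<tau> (Neg p) = wf_fm \<tau> p"
| "wf_fm \<tau> (Conj p q) = (wf_fm \<tau> p \<and> wf_fm \<tau> q)"
| "wf_fm \<tau> (Disj p q) = (wf_fm \<tau> p \<and> wf_fm \<tau> q)"
| "wf_fm \<tau> (Imp p q) = (wf_fm \<tau> p \<and> wf_fm \<tau> q)"
| "wf_fm \<tau> (Ex x p) = wf_fm \<tau> p"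
| "wf_fm \<tau> (All x p) = wf_fm \<tau> p"

definition sentence :: "sig \<Rightarrow> fm \<Rightarrow> bool" where
  "sentence \<tau> \<phi> \<longleftrightarrow> wf_fm \<tau> \<phi> \<and> fv \<phi> = {}"

definition models :: "'a strc \<Rightarrow> fm \<Rightarrow> bool" where
  "models A \<phi> \<longleftrightarrow> (\<forall>v. sat A v \<phi>)"

fun is_atom :: "fm \<Rightarrow> bool" where
  "is_atom (Eq s t) = True"
| "is_atom (Rel R ts) = True"
| "is_atom _ = False"

fun conjs :: "fm list \<Rightarrow> fm" where
  "conjs [] = FTrue"
| "conjs (p # ps) = Conj p (conjs ps)"

fun disjs :: "fm list \<Rightarrow> fm" where
  "disjs [] = FFalse"
| "disjs (p # ps) = Disj p (disjs ps)"

text \<open>A GD: \<forall>xs (body \<longrightarrow> \<exists>ys (head_1 \<or> ... \<or> head_n)), bodies/heads conjunctions of atoms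
  (equalities allowed); n = 0 gives head \<bottom>.\<close>
definition is_gd :: "sig \<Rightarrow> fm \<Rightarrow> bool" where
  "is_gd \<tau> \<gamma> \<longleftrightarrow> sentence \<tau> \<gamma> \<and>
     (\<exists>xs body ys heads.
        (\<forall>a\<in>set body. is_atom a) \<and> (\<forall>h\<in>set heads. \<forall>a\<in>set h. is_atom a) \<and>
        \<gamma> = foldr All xs (Imp (conjs body) (foldr Ex ys (disjs (map conjs heads)))))"

text \<open>(A, as) \<rightarrow> (B, bs): a homomorphism A \<rightarrow> B (preserving constants and relations of \<tau>)
  that also maps the tuple as to bs (interpretations of the fresh constants).\<close>
definition hom_exp :: "sig \<Rightarrow> 'a strc \<Rightarrow> 'a list \<Rightarrow> 'b strc \<Rightarrow> 'b list \<Rightarrow> bool" where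
  "hom_exp \<tau> A as B bs \<longleftrightarrow> (\<exists>h.
      (\<forall>a\<in>dom A. h a \<in> dom B)
    \<and> (\<forall>c\<in>cnsts \<tau>. h (cint A c) = cint B c)
    \<and> (\<forall>R\<in>rels \<tau>. \<forall>t\<in>rint A R. map h t \<in> rint B R)
    \<and> map h as = bs)"

definition glob_hom :: "sig \<Rightarrow> 'a strc \<Rightarrow> 'b strc \<Rightarrow> bool" where
  "glob_hom \<tau> A B \<longleftrightarrow> (\<exists>\<pi>. \<forall>as. set as \<subseteq> dom A \<longrightarrow>
      length (\<pi> as) = length as \<and> set (\<pi> as) \<subseteq> dom B
      \<and> hom_exp \<tau> A as B (\<pi> as) \<and> hom_exp \<tau> B (\<pi> as) A as)"

end

theory Submission
  imports Defs
begin

(* The witness gap_fm says: the points (elements x with not x < x) are strictly linearly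
   ordered by <, the successor relation joins only immediate neighbours, some point in
   [src, tgt) has no successor, and there is a universal element related to everything.

   Preservation: for finite A, a single instance of A => B, taken at a list of all elements
   of A, gives homomorphisms f : A -> B and g : B -> A with g o f = id on A, so f reflects
   both relations. The order axioms and the universal element pull back directly; a gap of A
   is a maximal point a with src <= a and f a <= x, where x is a gap of B.

   No finite set of GDs: GDs have positive bodies and heads, so a GD with n universally
   quantified variables already transfers along homomorphisms that exist in both directions
   for each n-tuple. Such homomorphisms exist between the path 1 < ... < N with all successor
   edges (no gap) and the path 1 < ... < 2N without the edge N -> N + 1 (a gap) once
   N >= n + 3: cut the first path at a point m outside the tuple, send m to the universal
   element 0, and shift everything above m by N. *)

section \<open>Positive formulas and generalized dependencies\<close>

definition is_hom :: "sig \<Rightarrow> 'a strc \<Rightarrow> 'b strc \<Rightarrow> ('a \<Rightarrow> 'b) \<Rightarrow> bool" where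
  "is_hom \<tau> A B h \<longleftrightarrow> (\<forall>a\<in>dom A. h a \<in> dom B) \<and> (\<forall>c\<in>cnsts \<tau>. h (cint A c) = cint B c)
     \<and> (\<forall>R\<in>rels \<tau>. \<forall>t\<in>rint A R. map h t \<in> rint B R)"

lemma hom_exp_iff: "hom_exp \<tau> A as B bs \<longleftrightarrow> (\<exists>h. is_hom \<tau> A B h \<and> map h as = bs)"
  by (simp add: hom_exp_def is_hom_def)

fun positive_fm :: "fm \<Rightarrow> bool" where
  "positive_fm FTrue = True"
| "positive_fm FFalse = True"
| "positive_fm (Eq s t) = True"
| "positive_fm (Rel R ts) = True"
| "positive_fm (Conj p q) = (positive_fm p \<and> positive_fm q)"
| "positive_fm (Disj p q) = (positive_fm p \<and> positive_fm q)"
| "positive_fm (Ex x p) = positive_fm p"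
| "positive_fm (Neg p) = False"
| "positive_fm (Imp p q) = False"
| "positive_fm (All x p) = False"

lemma eval_hom:
  "is_hom \<tau> A B h \<Longrightarrow> wf_trm \<tau> t \<Longrightarrow> eval B (h \<circ> v) t = h (eval A v t)"
  by (cases t) (auto simp: is_hom_def)

lemma sat_hom_positive:
  assumes "is_hom \<tau> A B h"
  shows "positive_fm p \<Longrightarrow> wf_fm \<tau> p \<Longrightarrow> sat A v p \<Longrightarrow> sat B (h \<circ> v) p"
proof (induction p arbitrary: v)
  case (Rel R ts)
  then have "map (eval B (h \<circ> v)) ts = map h (map (eval A v) ts)"
    by (simp add: eval_hom[OF assms])
  moreover have "map h (map (eval A v) ts) \<in> rint B R"
    using Rel.prems assms by (auto simp: is_hom_def simp del: map_map)
  ultimately show ?case by (metis sat.simps(4))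
next
  case (Ex x p)
  then obtain a where a: "a \<in> dom A" "sat A (v(x := a)) p" by auto
  have "sat B (h \<circ> v(x := a)) p" by (rule Ex.IH[OF _ _ a(2)]) (use Ex.prems in auto)
  moreover have "h \<circ> v(x := a) = (h \<circ> v)(x := h a)" by auto
  ultimately have "sat B ((h \<circ> v)(x := h a)) p" by (simp only:)
  moreover have "h a \<in> dom B" using a assms by (auto simp: is_hom_def)
  ultimately show ?case by (subst sat.simps) blast
qed (auto simp: eval_hom[OF assms])

lemma sat_cong_fv: "\<forall>x\<in>fv p. v x = w x \<Longrightarrow> sat A v p = sat A w p"
proof (induction p arbitrary: v w)
  case (Eq s t)
  then show ?case by (cases s; cases t) auto
next
  case (Rel R ts)
  have "map (eval A v) ts = map (eval A w) ts"
  proof (rule map_cong)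
    fix t assume "t \<in> set ts"
    then have "\<forall>x\<in>tvars t. v x = w x" using Rel.prems by auto
    then show "eval A v t = eval A w t" by (cases t) auto
  qed simp
  then show ?case by (simp only: sat.simps)
next
  case (Ex x p)
  have "sat A (v(x := a)) p = sat A (w(x := a)) p" for a
    by (rule Ex.IH) (use Ex.prems in auto)
  then show ?case by (simp only: sat.simps)
next
  case (All x p)
  have "sat A (v(x := a)) p = sat A (w(x := a)) p" for a
    by (rule All.IH) (use All.prems in auto)
  then show ?case by (simp only: sat.simps)
qed (simp_all (no_asm_use), (metis UnCI)+)

lemma fv_foldr_All: "fv (foldr All xs p) = fv p - set xs"
  by (induction xs) auto

lemma wf_fm_foldr_All: "wf_fm \<tau> (foldr All xs p) = wf_fm \<tau> p"
  by (induction xs) auto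

lemma positive_fm_foldr_Ex: "positive_fm (foldr Ex xs p) = positive_fm p"
  by (induction xs) auto

lemma positive_fm_conjs: "\<forall>p\<in>set ps. positive_fm p \<Longrightarrow> positive_fm (conjs ps)"
  by (induction ps) auto

lemma positive_fm_disjs: "\<forall>p\<in>set ps. positive_fm p \<Longrightarrow> positive_fm (disjs ps)"
  by (induction ps) auto

lemma positive_fm_atom: "is_atom p \<Longrightarrow> positive_fm p"
  by (cases p) auto

lemma sat_foldr_AllI:
  assumes "\<And>w. \<forall>y. y \<notin> set xs \<longrightarrow> w y = v y \<Longrightarrow> \<forall>y\<in>set xs. w y \<in> dom A \<Longrightarrow> sat A w p"
  shows "sat A v (foldr All xs p)"
  using assms
proof (induction xs arbitrary: v)
  case (Cons x xs)
  have "sat A (v(x := a)) (foldr All xs p)" if "a \<in> dom A" for a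
  proof (rule Cons.IH)
    fix w assume "\<forall>y. y \<notin> set xs \<longrightarrow> w y = (v(x := a)) y" "\<forall>y\<in>set xs. w y \<in> dom A"
    with \<open>a \<in> dom A\<close> show "sat A w p"
      by (intro Cons.prems) (auto split: if_splits)
  qed
  then show ?case by simp
qed simp

lemma sat_foldr_AllD: "sat A v (foldr All xs p) \<Longrightarrow> \<forall>y\<in>set xs. v y \<in> dom A \<Longrightarrow> sat A v p"
proof (induction xs)
  case (Cons x xs)
  then have "sat A (v(x := v x)) (foldr All xs p)" by auto
  with Cons show ?case by simp
qed simp

lemma models_foldr_All:
  "models A (foldr All xs p) \<longleftrightarrow> (\<forall>w. (\<forall>y\<in>set xs. w y \<in> dom A) \<longrightarrow> sat A w p)"
  unfolding models_def using sat_foldr_AllI sat_foldr_AllD by metis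

definition glob_hom_upto :: "sig \<Rightarrow> nat \<Rightarrow> 'a strc \<Rightarrow> 'b strc \<Rightarrow> bool" where
  "glob_hom_upto \<tau> n A B \<longleftrightarrow> (\<forall>as. set as \<subseteq> dom A \<and> length as \<le> n \<longrightarrow>
      (\<exists>bs. hom_exp \<tau> A as B bs \<and> hom_exp \<tau> B bs A as))"

definition is_gd_upto :: "sig \<Rightarrow> nat \<Rightarrow> fm \<Rightarrow> bool" where
  "is_gd_upto \<tau> n \<gamma> \<longleftrightarrow> sentence \<tau> \<gamma> \<and>
     (\<exists>xs body ys heads. length xs \<le> n \<and>
        (\<forall>a\<in>set body. is_atom a) \<and> (\<forall>h\<in>set heads. \<forall>a\<in>set h. is_atom a) \<and>
        \<gamma> = foldr All xs (Imp (conjs body) (foldr Ex ys (disjs (map conjs heads)))))"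

lemma is_gd_iff_is_gd_upto: "is_gd \<tau> \<gamma> \<longleftrightarrow> (\<exists>n. is_gd_upto \<tau> n \<gamma>)"
  unfolding is_gd_def is_gd_upto_def by blast

lemma is_gd_upto_mono: "is_gd_upto \<tau> m \<gamma> \<Longrightarrow> m \<le> n \<Longrightarrow> is_gd_upto \<tau> n \<gamma>"
  unfolding is_gd_upto_def using le_trans by blast

lemma finite_gd_set_is_gd_upto:
  assumes "finite \<Sigma>" "\<forall>\<gamma>\<in>\<Sigma>. is_gd \<tau> \<gamma>"
  shows "\<exists>n. \<forall>\<gamma>\<in>\<Sigma>. is_gd_upto \<tau> n \<gamma>"
proof -
  obtain k where k: "\<forall>\<gamma>\<in>\<Sigma>. is_gd_upto \<tau> (k \<gamma>) \<gamma>"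
    using assms(2) unfolding is_gd_iff_is_gd_upto by metis
  have "is_gd_upto \<tau> (\<Sum>\<gamma>\<in>\<Sigma>. k \<gamma>) \<gamma>" if "\<gamma> \<in> \<Sigma>" for \<gamma>
    using k that assms(1) by (auto intro: is_gd_upto_mono member_le_sum)
  then show ?thesis by blast
qed

lemma is_gd_upto_preserved:
  assumes gd: "is_gd_upto \<tau> n \<gamma>" and AB: "glob_hom_upto \<tau> n A B" and B: "models B \<gamma>"
  shows "models A \<gamma>"
proof -
  obtain xs body ys heads where len: "length xs \<le> n"
    and atoms: "\<forall>a\<in>set body. is_atom a" "\<forall>h\<in>set heads. \<forall>a\<in>set h. is_atom a"
    and \<gamma>: "\<gamma> = foldr All xs (Imp (conjs body) (foldr Ex ys (disjs (map conjs heads))))"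
    using gd unfolding is_gd_upto_def by blast
  define H where "H = foldr Ex ys (disjs (map conjs heads))"
  have wf: "wf_fm \<tau> (conjs body)" "wf_fm \<tau> H" and fv_H: "fv H \<subseteq> set xs"
    using gd unfolding is_gd_upto_def sentence_def \<gamma> H_def[symmetric]
    by (auto simp: wf_fm_foldr_All fv_foldr_All)
  have pos: "positive_fm (conjs body)" "positive_fm H"
    using atoms unfolding H_def positive_fm_foldr_Ex
    by (auto intro!: positive_fm_conjs positive_fm_disjs simp: positive_fm_atom)
  show ?thesis unfolding \<gamma> H_def[symmetric] models_foldr_All
  proof (intro allI impI)
    fix w assume w: "\<forall>y\<in>set xs. w y \<in> dom A"
    show "sat A w (Imp (conjs body) H)"
    proof (subst sat.simps, intro impI)
      assume body: "sat A w (conjs body)"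
      \<comment> \<open>Push the body to B along f, use the GD in B, and pull the head back along g.\<close>
      have "set (map w xs) \<subseteq> dom A" "length (map w xs) \<le> n" using w len by auto
      then obtain f g where f: "is_hom \<tau> A B f" and g: "is_hom \<tau> B A g"
        and gf: "map g (map f (map w xs)) = map w xs"
        using AB unfolding glob_hom_upto_def hom_exp_iff by blast
      have "\<forall>y\<in>set xs. (f \<circ> w) y \<in> dom B" using w f by (auto simp: is_hom_def)
      then have "sat B (f \<circ> w) (Imp (conjs body) H)"
        using B unfolding \<gamma> H_def[symmetric] models_foldr_All by blast
      then have "sat B (f \<circ> w) H" using sat_hom_positive[OF f pos(1) wf(1) body] by simp
      then have "sat A (g \<circ> (f \<circ> w)) H" using sat_hom_positive[OF g pos(2) wf(2)] by blast
      moreover have "\<forall>y\<in>fv H. (g \<circ> (f \<circ> w)) y = w y"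
        using gf fv_H by (auto simp: map_eq_conv)
      ultimately show "sat A w H" using sat_cong_fv by blast
    qed
  qed
qed

section \<open>The gap sentence\<close>

definition src :: nat where "src = 0"
definition tgt :: nat where "tgt = 1"
definition lt_sym :: "nat \<times> nat" where "lt_sym = (0, 2)"
definition succ_sym :: "nat \<times> nat" where "succ_sym = (1, 2)"

lemma gap_syms_distinct [simp]: "src \<noteq> tgt" "tgt \<noteq> src" "lt_sym \<noteq> succ_sym" "succ_sym \<noteq> lt_sym"
  by (simp_all add: src_def tgt_def lt_sym_def succ_sym_def)

definition gap_sig :: sig where
  "gap_sig = \<lparr>cnsts = {src, tgt}, rels = {lt_sym, succ_sym}\<rparr>"

abbreviation lt_rel :: "'a strc \<Rightarrow> 'a \<Rightarrow> 'a \<Rightarrow> bool" where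
  "lt_rel A x y \<equiv> [x, y] \<in> rint A lt_sym"

abbreviation succ_rel :: "'a strc \<Rightarrow> 'a \<Rightarrow> 'a \<Rightarrow> bool" where
  "succ_rel A x y \<equiv> [x, y] \<in> rint A succ_sym"

(* The universal element satisfies u < u, which keeps it out of the order axioms. *)
definition pts :: "'a strc \<Rightarrow> 'a set" where
  "pts A = {x \<in> dom A. \<not> lt_rel A x x}"

definition is_universal :: "'a strc \<Rightarrow> 'a \<Rightarrow> bool" where
  "is_universal A u \<longleftrightarrow> u \<in> dom A \<and>
     (\<forall>x\<in>dom A. lt_rel A u x \<and> lt_rel A x u \<and> succ_rel A u x \<and> succ_rel A x u)"

definition succ_order :: "'a strc \<Rightarrow> bool" where
  "succ_order A \<longleftrightarrow>
     (\<forall>x\<in>pts A. \<forall>y\<in>pts A. lt_rel A x y \<or> lt_rel A y x \<or> x = y) \<and>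
     (\<forall>x\<in>pts A. \<forall>y\<in>pts A. \<forall>z\<in>pts A. lt_rel A x y \<longrightarrow> lt_rel A y z \<longrightarrow> lt_rel A x z) \<and>
     (\<forall>x\<in>pts A. \<forall>y\<in>pts A. succ_rel A x y \<longrightarrow>
        lt_rel A x y \<and> (\<forall>z\<in>pts A. \<not> (lt_rel A x z \<and> lt_rel A z y)))"

definition has_gap :: "'a strc \<Rightarrow> bool" where
  "has_gap A \<longleftrightarrow> cint A src \<in> pts A \<and> cint A tgt \<in> pts A \<and>
     (\<exists>x\<in>pts A. (lt_rel A (cint A src) x \<or> cint A src = x) \<and> lt_rel A x (cint A tgt) \<and>
        (\<forall>y\<in>pts A. \<not> succ_rel A x y))"

definition Lt :: "trm \<Rightarrow> trm \<Rightarrow> fm" where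
  "Lt s t = Rel lt_sym [s, t]"

definition Succ :: "trm \<Rightarrow> trm \<Rightarrow> fm" where
  "Succ s t = Rel succ_sym [s, t]"

definition Pt :: "trm \<Rightarrow> fm" where
  "Pt t = Neg (Lt t t)"

definition gap_fm :: fm where
  "gap_fm = conjs
    [Ex 0 (All 1 (conjs [Lt (Var 0) (Var 1), Lt (Var 1) (Var 0),
                         Succ (Var 0) (Var 1), Succ (Var 1) (Var 0)])),
     All 0 (Imp (Pt (Var 0)) (All 1 (Imp (Pt (Var 1))
       (disjs [Lt (Var 0) (Var 1), Lt (Var 1) (Var 0), Eq (Var 0) (Var 1)])))),
     All 0 (Imp (Pt (Var 0)) (All 1 (Imp (Pt (Var 1)) (All 2 (Imp (Pt (Var 2))
       (Imp (Lt (Var 0) (Var 1)) (Imp (Lt (Var 1) (Var 2)) (Lt (Var 0) (Var 2))))))))),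
     All 0 (Imp (Pt (Var 0)) (All 1 (Imp (Pt (Var 1)) (Imp (Succ (Var 0) (Var 1))
       (Conj (Lt (Var 0) (Var 1))
         (All 2 (Imp (Pt (Var 2)) (Neg (Conj (Lt (Var 0) (Var 2)) (Lt (Var 2) (Var 1))))))))))),
     Pt (Cst src), Pt (Cst tgt),
     Ex 0 (conjs [Pt (Var 0), Disj (Lt (Cst src) (Var 0)) (Eq (Cst src) (Var 0)), Lt (Var 0) (Cst tgt),
                  All 1 (Imp (Pt (Var 1)) (Neg (Succ (Var 0) (Var 1))))])]"

lemma sentence_gap_fm: "sentence gap_sig gap_fm"
  unfolding sentence_def gap_fm_def Lt_def Succ_def Pt_def gap_sig_def by (auto simp: lt_sym_def succ_sym_def)

lemma Ball_pts: "(\<forall>x\<in>pts A. P x) \<longleftrightarrow> (\<forall>x\<in>dom A. \<not> lt_rel A x x \<longrightarrow> P x)"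
  and Bex_pts: "(\<exists>x\<in>pts A. P x) \<longleftrightarrow> (\<exists>x\<in>dom A. \<not> lt_rel A x x \<and> P x)"
  by (auto simp: pts_def)

lemma models_gap_fm:
  assumes "is_struct gap_sig A"
  shows "models A gap_fm \<longleftrightarrow> (\<exists>u. is_universal A u) \<and> succ_order A \<and> has_gap A"
proof -
  have "cint A src \<in> dom A" "cint A tgt \<in> dom A"
    using assms by (auto simp: is_struct_def gap_sig_def)
  then show ?thesis
    unfolding models_def gap_fm_def Lt_def Succ_def Pt_def is_universal_def succ_order_def
      has_gap_def Ball_pts Bex_pts
    by (simp add: pts_def Bex_def)
qed

lemma pts_dom: "x \<in> pts A \<Longrightarrow> x \<in> dom A"
  by (simp add: pts_def)

lemma succ_order_linear:
  "succ_order A \<Longrightarrow> x \<in> pts A \<Longrightarrow> y \<in> pts A \<Longrightarrow> lt_rel A x y \<or> lt_rel A y x \<or> x = y"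
  unfolding succ_order_def by blast

lemma succ_order_trans:
  "succ_order A \<Longrightarrow> x \<in> pts A \<Longrightarrow> y \<in> pts A \<Longrightarrow> z \<in> pts A \<Longrightarrow>
    lt_rel A x y \<Longrightarrow> lt_rel A y z \<Longrightarrow> lt_rel A x z"
  unfolding succ_order_def by blast

lemma succ_order_cover:
  assumes "succ_order A" "x \<in> pts A" "y \<in> pts A" "succ_rel A x y"
  shows "lt_rel A x y" and "z \<in> pts A \<Longrightarrow> \<not> (lt_rel A x z \<and> lt_rel A z y)"
  using assms unfolding succ_order_def by blast+

section \<open>Preservation under globally-homomorphic preimages\<close>

lemma finite_strict_order_has_maximal:
  assumes "finite Y" "y \<in> Y"
    and irrefl: "\<forall>x\<in>Y. \<not> r x x"
    and trans: "\<forall>x\<in>Y. \<forall>y\<in>Y. \<forall>z\<in>Y. r x y \<longrightarrow> r y z \<longrightarrow> r x z"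
  obtains a where "a \<in> Y" "\<forall>b\<in>Y. \<not> r a b"
proof -
  define R where "R = {(b, a). a \<in> Y \<and> b \<in> Y \<and> r a b}"
  have "R \<subseteq> Y \<times> Y" by (auto simp: R_def)
  then have "finite R" using assms(1) by (simp add: finite_subset)
  moreover have "trans R"
    using trans unfolding R_def trans_def by blast
  moreover have "irrefl R"
    using irrefl unfolding R_def irrefl_def by blast
  ultimately have "wf R" by (simp add: finite_acyclic_wf acyclic_irrefl)
  then have "\<exists>a\<in>Y. \<forall>b. (b, a) \<in> R \<longrightarrow> b \<notin> Y"
    using assms(2) unfolding wf_eq_minimal by blast
  then show ?thesis using that unfolding R_def by blast
qed

lemma glob_hom_finite_retraction:
  assumes "glob_hom \<tau> A B" "finite (dom A)"
  obtains f g where "is_hom \<tau> A B f" "is_hom \<tau> B A g" "\<And>x. x \<in> dom A \<Longrightarrow> g (f x) = x"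
proof -
  obtain as where as: "set as = dom A" using assms(2) finite_list by blast
  then obtain bs where "hom_exp \<tau> A as B bs" "hom_exp \<tau> B bs A as"
    using assms(1) unfolding glob_hom_def by blast
  then obtain f g where "is_hom \<tau> A B f" "is_hom \<tau> B A g" "map (g \<circ> f) as = map id as"
    unfolding hom_exp_iff by auto
  moreover from this(3) have "\<forall>x\<in>dom A. g (f x) = x"
    unfolding map_eq_conv as by simp
  ultimately show ?thesis using that by blast
qed

lemma is_hom_gap_sig_iff:
  assumes "is_struct gap_sig A"
  shows "is_hom gap_sig A B h \<longleftrightarrow> (\<forall>a\<in>dom A. h a \<in> dom B) \<and>
    h (cint A src) = cint B src \<and> h (cint A tgt) = cint B tgt \<and>
    (\<forall>x y. lt_rel A x y \<longrightarrow> lt_rel B (h x) (h y)) \<and>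
    (\<forall>x y. succ_rel A x y \<longrightarrow> succ_rel B (h x) (h y))"
    (is "_ \<longleftrightarrow> ?dom \<and> ?c0 \<and> ?c1 \<and> ?lt \<and> ?succ")
proof
  assume "?dom \<and> ?c0 \<and> ?c1 \<and> ?lt \<and> ?succ"
  moreover have "map h t \<in> rint B R" if "?lt" "?succ" "R \<in> rels gap_sig" "t \<in> rint A R" for R t
  proof -
    have "length t = 2"
      using assms that(3,4) by (auto simp: is_struct_def gap_sig_def lt_sym_def succ_sym_def)
    then obtain x y where "t = [x, y]" by (auto simp: numeral_2_eq_2 length_Suc_conv)
    then show ?thesis using that by (auto simp: gap_sig_def)
  qed
  ultimately show "is_hom gap_sig A B h" unfolding is_hom_def by (auto simp: gap_sig_def)
qed (auto simp: is_hom_def gap_sig_def)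

locale gap_retraction =
  fixes A :: "'a strc" and B :: "'b strc" and f :: "'a \<Rightarrow> 'b" and g :: "'b \<Rightarrow> 'a"
  assumes struct_A: "is_struct gap_sig A"
    and struct_B: "is_struct gap_sig B"
    and hom_f: "is_hom gap_sig A B f"
    and hom_g: "is_hom gap_sig B A g"
    and retract: "\<And>x. x \<in> dom A \<Longrightarrow> g (f x) = x"
begin

lemma f_dom: "x \<in> dom A \<Longrightarrow> f x \<in> dom B"
  and g_dom: "y' \<in> dom B \<Longrightarrow> g y' \<in> dom A"
  and f_cint: "f (cint A src) = cint B src" "f (cint A tgt) = cint B tgt"
  and f_lt: "lt_rel A x y \<Longrightarrow> lt_rel B (f x) (f y)"
  and f_succ: "succ_rel A x y \<Longrightarrow> succ_rel B (f x) (f y)"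
  and g_lt: "lt_rel B x' y' \<Longrightarrow> lt_rel A (g x') (g y')"
  and g_succ: "succ_rel B x' y' \<Longrightarrow> succ_rel A (g x') (g y')"
  using hom_f hom_g struct_A struct_B by (auto simp: is_hom_gap_sig_iff)

lemma cint_dom: "cint A src \<in> dom A" "cint A tgt \<in> dom A"
  using struct_A by (auto simp: is_struct_def gap_sig_def)

lemma lt_iff: "x \<in> dom A \<Longrightarrow> y \<in> dom A \<Longrightarrow> lt_rel B (f x) (f y) \<longleftrightarrow> lt_rel A x y"
  using f_lt g_lt[of "f x" "f y"] retract by auto

lemma succ_iff: "x \<in> dom A \<Longrightarrow> y \<in> dom A \<Longrightarrow> succ_rel B (f x) (f y) \<longleftrightarrow> succ_rel A x y"
  using f_succ g_succ[of "f x" "f y"] retract by auto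

lemma pts_iff: "x \<in> dom A \<Longrightarrow> f x \<in> pts B \<longleftrightarrow> x \<in> pts A"
  using f_dom lt_iff by (auto simp: pts_def)

lemma f_pts: "x \<in> pts A \<Longrightarrow> f x \<in> pts B"
  by (simp add: pts_iff pts_dom)

lemma f_eq_iff: "x \<in> dom A \<Longrightarrow> y \<in> dom A \<Longrightarrow> f x = f y \<longleftrightarrow> x = y"
  using retract by metis

lemma is_universal_reflected:
  assumes "is_universal B u" shows "is_universal A (g u)"
proof -
  have "lt_rel A (g u) x \<and> lt_rel A x (g u) \<and> succ_rel A (g u) x \<and> succ_rel A x (g u)"
    if "x \<in> dom A" for x
  proof -
    have "lt_rel B u (f x) \<and> lt_rel B (f x) u \<and> succ_rel B u (f x) \<and> succ_rel B (f x) u"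
      using assms f_dom[OF that] by (auto simp: is_universal_def)
    then show ?thesis
      using g_lt[of u "f x"] g_lt[of "f x" u] g_succ[of u "f x"] g_succ[of "f x" u] retract[OF that]
      by simp
  qed
  moreover have "g u \<in> dom A" using assms g_dom by (auto simp: is_universal_def)
  ultimately show ?thesis by (auto simp: is_universal_def)
qed

lemma succ_order_reflected:
  assumes B: "succ_order B" shows "succ_order A"
proof -
  have "lt_rel A x y \<or> lt_rel A y x \<or> x = y" if "x \<in> pts A" "y \<in> pts A" for x y
    using succ_order_linear[OF B f_pts f_pts, OF that] by (simp add: lt_iff f_eq_iff pts_dom that)
  moreover have "lt_rel A x z" if "x \<in> pts A" "y \<in> pts A" "z \<in> pts A"
    "lt_rel A x y" "lt_rel A y z" for x y z
    using succ_order_trans[OF B f_pts f_pts f_pts, OF that(1-3)] that by (simp add: lt_iff pts_dom)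
  moreover have "lt_rel A x y \<and> (\<forall>z\<in>pts A. \<not> (lt_rel A x z \<and> lt_rel A z y))"
    if "x \<in> pts A" "y \<in> pts A" "succ_rel A x y" for x y
  proof -
    have "succ_rel B (f x) (f y)" using that by (simp add: succ_iff pts_dom)
    note cover = succ_order_cover[OF B f_pts f_pts, OF that(1,2) this]
    show ?thesis using cover(1) cover(2)[OF f_pts] that(1,2) by (auto simp: lt_iff pts_dom)
  qed
  ultimately show ?thesis unfolding succ_order_def by blast
qed

lemma no_succ_below_gap:
  assumes ord_B: "succ_order B" and xb: "xb \<in> pts B" "\<forall>y\<in>pts B. \<not> succ_rel B xb y"
    and a: "a \<in> pts A" "lt_rel B (f a) xb \<or> f a = xb"
    and above: "\<forall>b\<in>pts A. lt_rel A a b \<longrightarrow> lt_rel B xb (f b)"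
    and y: "y \<in> pts A"
  shows "\<not> succ_rel A a y"
proof
  assume "succ_rel A a y"
  then have succ: "succ_rel B (f a) (f y)" using a(1) y by (simp add: succ_iff pts_dom)
  note cover = succ_order_cover[OF ord_B f_pts[OF a(1)] f_pts[OF y] succ]
  have "f a \<noteq> xb" using xb(2) f_pts[OF y] succ by blast
  moreover have "lt_rel A a y" using cover(1) a(1) y by (simp add: lt_iff pts_dom)
  then have "lt_rel B xb (f y)" using above y by blast
  ultimately show False using a(2) cover(2)[OF xb(1)] by blast
qed

lemma has_gap_reflected:
  assumes fin: "finite (dom A)" and ord_B: "succ_order B" and gap_B: "has_gap B"
  shows "has_gap A"
proof -
  note trans_A = succ_order_trans[OF succ_order_reflected[OF ord_B]]
  have c_pts: "cint A src \<in> pts A" "cint A tgt \<in> pts A"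
    using gap_B pts_iff[OF cint_dom(1)] pts_iff[OF cint_dom(2)] f_cint unfolding has_gap_def by simp_all
  obtain xb where xb: "xb \<in> pts B" "\<forall>y\<in>pts B. \<not> succ_rel B xb y"
    "lt_rel B (cint B src) xb \<or> cint B src = xb" "lt_rel B xb (cint B tgt)"
    using gap_B unfolding has_gap_def by blast
  \<comment> \<open>A maximal element of Y is the gap of A.\<close>
  define Y where "Y = {a \<in> pts A. (lt_rel A (cint A src) a \<or> cint A src = a) \<and>
    (lt_rel B (f a) xb \<or> f a = xb)}"
  have "finite Y" using fin by (rule finite_subset[rotated]) (auto simp: Y_def pts_def)
  moreover have "cint A src \<in> Y" using c_pts xb(3) f_cint by (auto simp: Y_def)
  moreover have "\<forall>x\<in>Y. \<not> lt_rel A x x" by (auto simp: Y_def pts_def)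
  moreover have "\<forall>x\<in>Y. \<forall>y\<in>Y. \<forall>z\<in>Y. lt_rel A x y \<longrightarrow> lt_rel A y z \<longrightarrow> lt_rel A x z"
    using trans_A by (auto simp: Y_def)
  ultimately obtain a where a: "a \<in> Y" and a_max: "\<forall>b\<in>Y. \<not> lt_rel A a b"
    by (rule finite_strict_order_has_maximal)
  have a_pts: "a \<in> pts A" and c0_a: "lt_rel A (cint A src) a \<or> cint A src = a"
    and a_xb: "lt_rel B (f a) xb \<or> f a = xb"
    using a by (auto simp: Y_def)
  have "lt_rel B xb (f b)" if "b \<in> pts A" "lt_rel A a b" for b
  proof -
    have "lt_rel A (cint A src) b" using c0_a trans_A[OF c_pts(1) a_pts that(1)] that(2) by blast
    then have "\<not> (lt_rel B (f b) xb \<or> f b = xb)" using a_max that by (auto simp: Y_def)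
    then show ?thesis using succ_order_linear[OF ord_B xb(1) f_pts[OF that(1)]] by blast
  qed
  then have "\<forall>y\<in>pts A. \<not> succ_rel A a y"
    using no_succ_below_gap[OF ord_B xb(1,2) a_pts a_xb] by blast
  moreover have "lt_rel A a (cint A tgt)"
  proof -
    have "lt_rel B (f a) (cint B tgt)"
      using a_xb xb(4) succ_order_trans[OF ord_B f_pts[OF a_pts] xb(1) f_pts[OF c_pts(2)]] f_cint(2)
      by auto
    then show ?thesis using f_cint(2) lt_iff[OF pts_dom[OF a_pts] cint_dom(2)] by simp
  qed
  ultimately show ?thesis unfolding has_gap_def using c_pts a_pts c0_a by blast
qed

lemma models_gap_fm_reflected: "finite (dom A) \<Longrightarrow> models B gap_fm \<Longrightarrow> models A gap_fm"
  using models_gap_fm[OF struct_A] models_gap_fm[OF struct_B]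
    is_universal_reflected succ_order_reflected has_gap_reflected by blast

end

lemma gap_fm_preserved:
  assumes "is_struct gap_sig A" "finite (dom A)" "is_struct gap_sig B"
    and "glob_hom gap_sig A B" "models B gap_fm"
  shows "models A gap_fm"
proof -
  obtain f g where "is_hom gap_sig A B f" "is_hom gap_sig B A g" "\<And>x. x \<in> dom A \<Longrightarrow> g (f x) = x"
    using glob_hom_finite_retraction assms(2,4) by blast
  with assms(1,3) interpret gap_retraction A B f g by unfold_locales
  show ?thesis using models_gap_fm_reflected assms(2,5) .
qed

lemma finite_gd_set_preserved_upto:
  assumes "finite \<Sigma>" "\<forall>\<gamma>\<in>\<Sigma>. is_gd \<tau> \<gamma>"
  shows "\<exists>n. \<forall>(A :: 'a strc) (B :: 'b strc). glob_hom_upto \<tau> n A B \<longrightarrow>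
           (\<forall>\<gamma>\<in>\<Sigma>. models B \<gamma>) \<longrightarrow> (\<forall>\<gamma>\<in>\<Sigma>. models A \<gamma>)"
proof -
  obtain n where "\<forall>\<gamma>\<in>\<Sigma>. is_gd_upto \<tau> n \<gamma>" using finite_gd_set_is_gd_upto[OF assms] by blast
  then show ?thesis using is_gd_upto_preserved by blast
qed

section \<open>Paths with and without a gap\<close>

definition path_strc :: "nat \<Rightarrow> nat set \<Rightarrow> nat strc" where
  "path_strc M G = \<lparr>dom = {0..M}, cint = (\<lambda>c. if c = src then 1 else M),
     rint = (\<lambda>R.
       if R = lt_sym then {[x, y] | x y. x \<le> M \<and> y \<le> M \<and> (x = 0 \<or> y = 0 \<or> x < y)}
       else if R = succ_sym then
         {[x, y] | x y. x \<le> M \<and> y \<le> M \<and> (x = 0 \<or> y = 0 \<or> (y = Suc x \<and> x \<notin> G))}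
       else {})\<rparr>"

lemma path_strc_simps [simp]:
  "dom (path_strc M G) = {0..M}"
  "cint (path_strc M G) src = 1"
  "cint (path_strc M G) tgt = M"
  "lt_rel (path_strc M G) x y \<longleftrightarrow> x \<le> M \<and> y \<le> M \<and> (x = 0 \<or> y = 0 \<or> x < y)"
  "succ_rel (path_strc M G) x y \<longleftrightarrow> x \<le> M \<and> y \<le> M \<and> (x = 0 \<or> y = 0 \<or> (y = Suc x \<and> x \<notin> G))"
  by (auto simp: path_strc_def)

lemma is_struct_path_strc: "1 \<le> M \<Longrightarrow> is_struct gap_sig (path_strc M G)"
  by (auto simp: is_struct_def gap_sig_def path_strc_def lt_sym_def succ_sym_def)

lemma pts_path_strc: "pts (path_strc M G) = {1..M}"
  by (auto simp: pts_def)

lemma models_gap_fm_path_strc: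
  assumes "1 \<le> M"
  shows "models (path_strc M G) gap_fm \<longleftrightarrow> (\<exists>x\<in>G. 1 \<le> x \<and> x < M)"
proof -
  have "is_universal (path_strc M G) 0" by (simp add: is_universal_def)
  moreover have "succ_order (path_strc M G)" by (auto simp: succ_order_def pts_path_strc)
  moreover have "has_gap (path_strc M G) \<longleftrightarrow> (\<exists>x\<in>G. 1 \<le> x \<and> x < M)"
  proof
    assume "has_gap (path_strc M G)"
    then obtain x where x: "x \<in> {1..M}" "lt_rel (path_strc M G) x M"
      "\<forall>y\<in>{1..M}. \<not> succ_rel (path_strc M G) x y"
      unfolding has_gap_def pts_path_strc path_strc_simps(3) by blast
    then have "x \<in> G" "1 \<le> x" "x < M" using x(3)[rule_format, of "Suc x"] by auto
    then show "\<exists>x\<in>G. 1 \<le> x \<and> x < M" by blast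
  next
    assume "\<exists>x\<in>G. 1 \<le> x \<and> x < M"
    then obtain x where "x \<in> G" "1 \<le> x" "x < M" by blast
    with assms show "has_gap (path_strc M G)"
      unfolding has_gap_def pts_path_strc by (auto intro!: bexI[of _ x])
  qed
  ultimately show ?thesis
    by (auto simp: models_gap_fm[OF is_struct_path_strc[OF assms]])
qed

lemma glob_hom_upto_path_strc:
  assumes "n + 3 \<le> N"
  shows "glob_hom_upto gap_sig n (path_strc N {}) (path_strc (2 * N) {N})"
  unfolding glob_hom_upto_def
proof (intro allI impI)
  fix as assume as: "set as \<subseteq> dom (path_strc N {}) \<and> length as \<le> n"
  obtain m where m: "2 \<le> m" "m < N" "m \<notin> set as"
  proof -
    have "card (set as) \<le> n" using as card_length[of as] by linarith
    with assms have "card (set as) < card {2..<N}" by simp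
    then have "\<not> {2..<N} \<subseteq> set as" using card_mono[of "set as" "{2..<N}"] by auto
    then obtain m where "m \<in> {2..<N}" "m \<notin> set as" by blast
    then show thesis using that[of m] by simp
  qed
  \<comment> \<open>f sends m to the universal element 0 and shifts the points above m past the gap at N;
    g undoes this away from m.\<close>
  define f :: "nat \<Rightarrow> nat" where "f = (\<lambda>x. if 1 \<le> x \<and> x < m then x else if m < x then x + N else 0)"
  define g :: "nat \<Rightarrow> nat" where "g = (\<lambda>y. if 1 \<le> y \<and> y < m then y else if N + m < y then y - N else 0)"
  have "is_hom gap_sig (path_strc N {}) (path_strc (2 * N) {N}) f"
    unfolding f_def using assms m by (subst is_hom_gap_sig_iff[OF is_struct_path_strc]) auto
  moreover have "is_hom gap_sig (path_strc (2 * N) {N}) (path_strc N {}) g"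
    unfolding g_def using assms m by (subst is_hom_gap_sig_iff[OF is_struct_path_strc]) auto
  moreover have "map g (map f as) = as"
    unfolding map_map by (rule map_idI) (use as m in \<open>auto simp: f_def g_def\<close>)
  ultimately show "\<exists>bs. hom_exp gap_sig (path_strc N {}) as (path_strc (2 * N) {N}) bs \<and>
      hom_exp gap_sig (path_strc (2 * N) {N}) bs (path_strc N {}) as"
    unfolding hom_exp_iff by blast
qed

lemma gap_fm_not_finite_gd_set:
  assumes "finite \<Sigma>" "\<forall>\<gamma>\<in>\<Sigma>. is_gd gap_sig \<gamma>"
  shows "\<exists>A :: nat strc. is_struct gap_sig A \<and> finite (dom A) \<and>
    models A gap_fm \<noteq> (\<forall>\<gamma>\<in>\<Sigma>. models A \<gamma>)"
proof (rule ccontr)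
  assume "\<not> ?thesis"
  then have equiv: "models A gap_fm \<longleftrightarrow> (\<forall>\<gamma>\<in>\<Sigma>. models A \<gamma>)"
    if "is_struct gap_sig A" "finite (dom A)" for A :: "nat strc"
    using that by blast
  obtain n where n: "\<forall>(A :: nat strc) (B :: nat strc). glob_hom_upto gap_sig n A B \<longrightarrow>
      (\<forall>\<gamma>\<in>\<Sigma>. models B \<gamma>) \<longrightarrow> (\<forall>\<gamma>\<in>\<Sigma>. models A \<gamma>)"
    using finite_gd_set_preserved_upto[OF assms] by blast
  define N where "N = n + 3"
  define A where "A = path_strc N {}"
  define B where "B = path_strc (2 * N) {N}"
  have structs: "is_struct gap_sig A" "finite (dom A)" "is_struct gap_sig B" "finite (dom B)"
    by (simp_all add: A_def B_def N_def is_struct_path_strc)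
  have "models B gap_fm" by (simp add: B_def N_def models_gap_fm_path_strc)
  then have "\<forall>\<gamma>\<in>\<Sigma>. models B \<gamma>" using equiv structs by blast
  moreover have "glob_hom_upto gap_sig n A B"
    unfolding A_def B_def N_def by (rule glob_hom_upto_path_strc) simp
  ultimately have "models A gap_fm" using n equiv structs by blast
  then show False by (simp add: A_def N_def models_gap_fm_path_strc)
qed

theorem theorem2:
  shows "\<exists>(\<tau>::sig) \<phi>. finite (cnsts \<tau>) \<and> finite (rels \<tau>) \<and> sentence \<tau> \<phi>
    \<and> (\<forall>(A :: nat strc) (B :: nat strc). is_struct \<tau> A \<and> finite (dom A) \<and> is_struct \<tau> B \<and> finite (dom B)
          \<and> glob_hom \<tau> A B \<and> models B \<phi> \<longrightarrow> models A \<phi>)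
    \<and> \<not> (\<exists>\<Sigma>. finite \<Sigma> \<and> (\<forall>\<gamma>\<in>\<Sigma>. is_gd \<tau> \<gamma>)
          \<and> (\<forall>A :: nat strc. is_struct \<tau> A \<and> finite (dom A) \<longrightarrow>
               (models A \<phi> \<longleftrightarrow> (\<forall>\<gamma>\<in>\<Sigma>. models A \<gamma>))))"
proof (intro exI[of _ gap_sig] exI[of _ gap_fm] conjI)
  show "finite (cnsts gap_sig)" "finite (rels gap_sig)" by (simp_all add: gap_sig_def)
  show "sentence gap_sig gap_fm" by (rule sentence_gap_fm)
  show "\<forall>(A :: nat strc) (B :: nat strc). is_struct gap_sig A \<and> finite (dom A) \<and>
      is_struct gap_sig B \<and> finite (dom B) \<and> glob_hom gap_sig A B \<and> models B gap_fm \<longrightarrow>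
      models A gap_fm"
    using gap_fm_preserved by blast
  show "\<not> (\<exists>\<Sigma>. finite \<Sigma> \<and> (\<forall>\<gamma>\<in>\<Sigma>. is_gd gap_sig \<gamma>) \<and> (\<forall>A :: nat strc.
      is_struct gap_sig A \<and> finite (dom A) \<longrightarrow> (models A gap_fm \<longleftrightarrow> (\<forall>\<gamma>\<in>\<Sigma>. models A \<gamma>))))"
    using gap_fm_not_finite_gd_set by blast
qed

end
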